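(* On the 36-hole square board $S=\{0,1,\dots,5\}^2$, let $b$ be a board position which is solvable and which is invariant under the $180^\circ$ rotation $(x,y)\mapsto(5-x,5-y)$. Equivalently, $b$ has one of the symmetry types 1–5: square symmetry, $90^\circ$ rotational symmetry, both diagonal reflections, both orthogonal reflections, or $180^\circ$ rotation. Then $b$ lies in position class A, the position class of the four-peg position $\{(2,2),(2,3),(3,2),(3,3)\}$.
   Context: A board position on $S=\{0,\dots,5\}^2$ is a subset of $S$ (the occupied holes). A jump: given $d\in\{(\pm1,0),(0,\pm1)\}$ and $p$ with $p,p+d,p+2d\in S$, $p,p+d$ occupied and $p+2d$ empty, the jump removes the pegs at $p,p+d$ and puts a peg at $p+2d$. A position is solvable if some sequence of jumps leads to exactly one peg. Position classes. For a position $b$ and $i\in\{0,1,2\}$ let $N_i=|\{(x,y)\in b: x+y\equiv i\pmod 3\}|$ and $M_i=|\{(x,y)\in b: x-y\equiv i\pmod 3\}|$. The position class of $b$ is the vector $$(N_1+N_2,\ N_0+N_2,\ N_0+N_1,\ M_1+M_2,\ M_0+M_2,\ M_0+M_1)\bmod 2.$$ Two positions are in the same position class iff these vectors agree. The symmetries are the dihedral group of the square acting about the centre $(2.5,2.5)$. *)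

theory Defs
  imports Main
begin

definition Board :: "(int \<times> int) set" where
  "Board = {0..5} \<times> {0..5}"

definition dirs :: "(int \<times> int) set" where
  "dirs = {(1,0), (-1,0), (0,1), (0,-1)}"

definition padd :: "int \<times> int \<Rightarrow> int \<times> int \<Rightarrow> int \<times> int" where
  "padd p d = (fst p + fst d, snd p + snd d)"

definition psc :: "int \<Rightarrow> int \<times> int \<Rightarrow> int \<times> int" where
  "psc k d = (k * fst d, k * snd d)"

definition jump :: "(int \<times> int) set \<Rightarrow> (int \<times> int) set \<Rightarrow> bool" where
  "jump b b' \<longleftrightarrow> (\<exists>d p. d \<in> dirs \<and>
      p \<in> Board \<and> padd p d \<in> Board \<and> padd p (psc 2 d) \<in> Board \<and>
      p \<in> b \<and> padd p d \<in> b \<and> padd p (psc 2 d) \<notin> b \<and>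
      b' = insert (padd p (psc 2 d)) (b - {p, padd p d}))"

definition position :: "(int \<times> int) set \<Rightarrow> bool" where
  "position b \<longleftrightarrow> b \<subseteq> Board"

definition solvable :: "(int \<times> int) set \<Rightarrow> bool" where
  "solvable b \<longleftrightarrow> (\<exists>b'. jump\<^sup>*\<^sup>* b b' \<and> card b' = 1)"

definition Ncount :: "(int \<times> int) set \<Rightarrow> int \<Rightarrow> nat" where
  "Ncount b i = card {q \<in> b. (fst q + snd q) mod 3 = i}"

definition Mcount :: "(int \<times> int) set \<Rightarrow> int \<Rightarrow> nat" where
  "Mcount b i = card {q \<in> b. (fst q - snd q) mod 3 = i}"

definition pos_class :: "(int \<times> int) set \<Rightarrow> bool list" where
  "pos_class b =
     [odd (Ncount b 1 + Ncount b 2), odd (Ncount b 0 + Ncount b 2), odd (Ncount b 0 + Ncount b 1),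
      odd (Mcount b 1 + Mcount b 2), odd (Mcount b 0 + Mcount b 2), odd (Mcount b 0 + Mcount b 1)]"

definition rot180 :: "int \<times> int \<Rightarrow> int \<times> int" where
  "rot180 q = (5 - fst q, 5 - snd q)"

definition classA :: "(int \<times> int) set" where
  "classA = {(2,2), (2,3), (3,2), (3,3)}"

end

theory Submission
  imports Defs
begin

text \<open>
  A jump toggles the occupancy of three consecutive holes on a line, and these three holes
  meet every residue class of \<open>x + y\<close> and of \<open>x - y\<close> modulo 3 exactly once. So every count
  \<open>N\<^sub>i\<close> and \<open>M\<^sub>i\<close> changes parity, the sums \<open>N\<^sub>i + N\<^sub>j\<close> and \<open>M\<^sub>i + M\<^sub>j\<close> keep theirs,
  and the position class is invariant under jumps. The rotation \<open>(x, y) \<mapsto> (5 - x, 5 - y)\<close>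
  swaps the residues 0 and 1 of \<open>x + y\<close> and the residues 1 and 2 of \<open>x - y\<close>, so a symmetric position has \<open>N\<^sub>0 = N\<^sub>1\<close> and
  \<open>M\<^sub>1 = M\<^sub>2\<close>. The single peg it reduces to therefore has even \<open>N\<^sub>0 + N\<^sub>1\<close> and
  \<open>M\<^sub>1 + M\<^sub>2\<close>, which forces \<open>x + y \<equiv> 2\<close> and \<open>x - y \<equiv> 0\<close>: the class of \<open>classA\<close>.
\<close>

lemma Collect_mem_insert:
  "{q \<in> insert x A. P q} = (if P x then insert x {q \<in> A. P q} else {q \<in> A. P q})"
  by auto

lemma odd_card_filter_jump_iff:
  assumes "finite b" "p \<in> b" "e \<in> b" "c \<notin> b"
    and "f p \<noteq> f e" "f p \<noteq> f c" "f e \<noteq> f c" "i \<in> {f p, f e, f c}"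
  shows "odd (card {q \<in> insert c (b - {p, e}). f q = i}) \<longleftrightarrow> even (card {q \<in> b. f q = i})"
proof -
  let ?F = "{q \<in> b. f q = i}"
  have fin: "finite ?F" using assms(1) by simp
  consider "i = f p" | "i = f e" | "i = f c" using assms(8) by blast
  then show ?thesis
  proof cases
    case 1
    then have "{q \<in> insert c (b - {p, e}). f q = i} = ?F - {p}" "p \<in> ?F"
      using assms by auto
    then show ?thesis using fin by (auto simp: card_gt_0_iff)
  next
    case 2
    then have "{q \<in> insert c (b - {p, e}). f q = i} = ?F - {e}" "e \<in> ?F"
      using assms by auto
    then show ?thesis using fin by (auto simp: card_gt_0_iff)
  next
    case 3
    then have "{q \<in> insert c (b - {p, e}). f q = i} = insert c ?F" "c \<notin> ?F"
      using assms by auto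
    then show ?thesis using fin by simp
  qed
qed

lemma mod3_progression_distinct:
  fixes a u :: int
  assumes "u mod 3 \<noteq> 0"
  shows "a mod 3 \<noteq> (a + u) mod 3" "a mod 3 \<noteq> (a + 2 * u) mod 3"
    "(a + u) mod 3 \<noteq> (a + 2 * u) mod 3"
    "i \<in> {0, 1, 2} \<Longrightarrow> i \<in> {a mod 3, (a + u) mod 3, (a + 2 * u) mod 3}"
proof -
  have "\<not> 3 dvd u" "\<not> 3 dvd 2 * u" using assms by presburger+
  then show distinct: "a mod 3 \<noteq> (a + u) mod 3" "a mod 3 \<noteq> (a + 2 * u) mod 3"
    "(a + u) mod 3 \<noteq> (a + 2 * u) mod 3"
    by (simp_all add: mod_eq_dvd_iff)
  assume "i \<in> {0, 1, 2}"
  with distinct show "i \<in> {a mod 3, (a + u) mod 3, (a + 2 * u) mod 3}"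
    using pos_mod_bound[of 3] pos_mod_sign[of 3] by fastforce
qed

text \<open>\<open>\<sigma> = 1\<close> gives the counts \<open>N\<^sub>i\<close>, \<open>\<sigma> = -1\<close> the counts \<open>M\<^sub>i\<close>.\<close>

lemma odd_card_residue_jump_iff:
  fixes \<sigma> i :: int
  assumes "jump b b'" "finite b" "\<sigma> \<in> {1, -1}" "i \<in> {0, 1, 2}"
  shows "odd (card {q \<in> b'. (fst q + \<sigma> * snd q) mod 3 = i})
    \<longleftrightarrow> even (card {q \<in> b. (fst q + \<sigma> * snd q) mod 3 = i})"
proof -
  obtain d p where d: "d \<in> dirs"
    and pegs: "p \<in> b" "padd p d \<in> b" "padd p (psc 2 d) \<notin> b"
    and b': "b' = insert (padd p (psc 2 d)) (b - {p, padd p d})"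
    using assms(1) unfolding jump_def by blast
  define g where "g q = (fst q + \<sigma> * snd q) mod 3" for q :: "int \<times> int"
  define a where "a = fst p + \<sigma> * snd p"
  define u where "u = fst d + \<sigma> * snd d"
  have u: "u mod 3 \<noteq> 0" using d assms(3) by (auto simp: dirs_def u_def)
  have residues: "g p = a mod 3" "g (padd p d) = (a + u) mod 3"
    "g (padd p (psc 2 d)) = (a + 2 * u) mod 3"
    by (simp_all add: g_def a_def u_def padd_def psc_def algebra_simps)
  have "g p \<noteq> g (padd p d)" "g p \<noteq> g (padd p (psc 2 d))" "g (padd p d) \<noteq> g (padd p (psc 2 d))"
    "i \<in> {g p, g (padd p d), g (padd p (psc 2 d))}"
    unfolding residues using mod3_progression_distinct[OF u] assms(4) by blast+
  then show ?thesis
    unfolding b' g_def[symmetric] by (rule odd_card_filter_jump_iff[OF assms(2) pegs])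
qed

lemma pos_class_jump:
  assumes "jump b b'" "finite b"
  shows "pos_class b' = pos_class b"
proof -
  have N: "odd (Ncount b' i) \<longleftrightarrow> even (Ncount b i)" if "i \<in> {0, 1, 2}" for i
    using odd_card_residue_jump_iff[OF assms, of 1 i] that by (simp add: Ncount_def)
  have M: "odd (Mcount b' i) \<longleftrightarrow> even (Mcount b i)" if "i \<in> {0, 1, 2}" for i
    using odd_card_residue_jump_iff[OF assms, of "-1" i] that by (simp add: Mcount_def)
  show ?thesis
    unfolding pos_class_def using N[of 0] N[of 1] N[of 2] M[of 0] M[of 1] M[of 2] by (simp, argo)
qed

lemma finite_jump: "jump b b' \<Longrightarrow> finite b \<Longrightarrow> finite b'"
  unfolding jump_def by auto

lemma pos_class_rtranclp_jump:
  assumes "jump\<^sup>*\<^sup>* b b'" "finite b"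
  shows "pos_class b' = pos_class b"
proof -
  from assms have "finite b' \<and> pos_class b' = pos_class b"
    by (induction rule: rtranclp_induct) (auto dest: finite_jump pos_class_jump)
  then show ?thesis ..
qed

lemma card_filter_comp_eq:
  assumes "inj f" "f ` b = b"
  shows "card {q \<in> b. P (f q)} = card {q \<in> b. P q}"
proof -
  have "f ` {q \<in> b. P (f q)} = {q \<in> b. P q}" using assms(2) by auto
  moreover have "inj_on f {q \<in> b. P (f q)}" using assms(1) by (rule inj_on_subset) simp
  ultimately show ?thesis by (metis card_image)
qed

lemma inj_rot180: "inj rot180"
  by (rule injI) (auto simp: rot180_def prod_eq_iff)

lemma Ncount_rot180_invariant:
  assumes "rot180 ` b = b"
  shows "Ncount b 1 = Ncount b 0"
proof -
  have "(fst (rot180 q) + snd (rot180 q)) mod 3 = 0 \<longleftrightarrow> (fst q + snd q) mod 3 = 1" for q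
    by (cases q) (simp add: rot180_def, presburger)
  then show ?thesis
    using card_filter_comp_eq[OF inj_rot180 assms, of "\<lambda>q. (fst q + snd q) mod 3 = 0"]
    by (simp add: Ncount_def)
qed

lemma Mcount_rot180_invariant:
  assumes "rot180 ` b = b"
  shows "Mcount b 2 = Mcount b 1"
proof -
  have "(fst (rot180 q) - snd (rot180 q)) mod 3 = 1 \<longleftrightarrow> (fst q - snd q) mod 3 = 2" for q
    by (cases q) (simp add: rot180_def, presburger)
  then show ?thesis
    using card_filter_comp_eq[OF inj_rot180 assms, of "\<lambda>q. (fst q - snd q) mod 3 = 1"]
    by (simp add: Mcount_def)
qed

lemma pos_class_singleton:
  fixes q :: "int \<times> int"
  defines "r \<equiv> (fst q + snd q) mod 3" and "s \<equiv> (fst q - snd q) mod 3"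
  shows "pos_class {q} = [r \<noteq> 0, r \<noteq> 1, r \<noteq> 2, s \<noteq> 0, s \<noteq> 1, s \<noteq> 2]"
proof -
  have "r = 0 \<or> r = 1 \<or> r = 2" "s = 0 \<or> s = 1 \<or> s = 2" unfolding r_def s_def by presburger+
  then show ?thesis
    unfolding pos_class_def Ncount_def Mcount_def Collect_mem_insert
    by (auto simp flip: r_def s_def)
qed

lemma pos_class_classA: "pos_class classA = [True, True, False, False, True, True]"
  unfolding classA_def pos_class_def Ncount_def Mcount_def Collect_mem_insert by simp

theorem mainTheorem4:
  fixes b :: "(int \<times> int) set"
  assumes "position b"
    and "solvable b"
    and "rot180 ` b = b"
  shows "pos_class b = pos_class classA"
proof -
  have "finite b"
    using assms(1) unfolding position_def Board_def by (rule finite_subset) simp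
  obtain q where "jump\<^sup>*\<^sup>* b {q}"
    using assms(2) unfolding solvable_def by (metis card_1_singletonE)
  then have q: "pos_class {q} = pos_class b"
    using pos_class_rtranclp_jump \<open>finite b\<close> by blast
  moreover have "even (Ncount b 0 + Ncount b 1)" "even (Mcount b 1 + Mcount b 2)"
    using Ncount_rot180_invariant[OF assms(3)] Mcount_rot180_invariant[OF assms(3)] by simp_all
  ultimately have "(fst q + snd q) mod 3 = 2" "(fst q - snd q) mod 3 = 0"
    unfolding pos_class_def[of b] pos_class_singleton by simp_all
  then have "pos_class {q} = pos_class classA"
    by (simp add: pos_class_singleton pos_class_classA)
  then show ?thesis using q by simp
qed

end
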